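(* Let $H=\sum_{i=1}^d\epsilon_i|\epsilon_i\rangle\langle\epsilon_i|$ be a Hamiltonian on $\mathbb{C}^d$ with orthonormal eigenbasis $\{|\epsilon_i\rangle\}$ and $\epsilon_1\le\cdots\le\epsilon_d$. Let $X$ be a (true, unknown) density matrix and $p_i=\mathrm{tr}(|\epsilon_i\rangle\langle\epsilon_i|X)$, $i=1,\dots,d$, and let $$\Omega_{\mathcal{I}}=\{\omega\succeq0:\ \mathrm{tr}(\omega)=1,\ \mathrm{tr}(\omega|\epsilon_i\rangle\langle\epsilon_i|)=p_i\ \forall i\}.$$ Let $\rho^\ast=\sum_i p_i|\epsilon_i\rangle\langle\epsilon_i|$. Then $\rho^\ast\in\Omega_{\mathcal{I}}$, the ergotropy is minimized over $\Omega_{\mathcal{I}}$ at $\rho^\ast$, and $$\min_{\omega\in\Omega_{\mathcal{I}}}\mathcal{E}(\omega,H)=\mathcal{E}(\rho^\ast,H)=\sum_{i=1}^dp_i\epsilon_i-\sum_{i=1}^dp_i^{\downarrow}\epsilon_i=\mathcal{E}_{IC}(X),$$ where $(p_1^\downarrow,\dots,p_d^\downarrow)$ is the nonincreasing rearrangement of $(p_1,\dots,p_d)$.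
   Context: The ergotropy of a state $\rho$ with Hamiltonian $H$ is $\mathcal{E}(\rho,H)=\max_{U}\big[\mathrm{tr}(\rho H)-\mathrm{tr}(HU\rho U^\dagger)\big]$ over $d\times d$ unitaries $U$. The incoherent ergotropy $\mathcal{E}_{IC}(X)$ of a state $X$ is the ergotropy of its dephased state in the energy eigenbasis, i.e. $\mathcal{E}_{IC}(X)=\mathcal{E}\big(\sum_i\langle\epsilon_i|X|\epsilon_i\rangle\,|\epsilon_i\rangle\langle\epsilon_i|,H\big)$. *)

theory Defs
  imports "Jordan_Normal_Form.Matrix"
begin

text \<open>Complex d x d matrices are represented by JNF matrices in carrier_mat d d;
  vectors of C^d by complex vec in carrier_vec d. Indices run over 0..d-1.\<close>

definition mtrace :: "complex mat \<Rightarrow> complex" where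
  "mtrace A = (\<Sum>i<dim_row A. A $$ (i,i))"

definition adj :: "complex mat \<Rightarrow> complex mat" where
  "adj A = mat (dim_col A) (dim_row A) (\<lambda>(i,j). cnj (A $$ (j,i)))"

text \<open>Inner product, antilinear in the first argument: cinner u v = <u|v>.\<close>
definition cinner :: "complex vec \<Rightarrow> complex vec \<Rightarrow> complex" where
  "cinner u v = (\<Sum>i<dim_vec v. cnj (u $ i) * v $ i)"

definition proj :: "complex vec \<Rightarrow> complex mat" where
  "proj v = mat (dim_vec v) (dim_vec v) (\<lambda>(i,j). v $ i * cnj (v $ j))"

definition spectral_sum :: "nat \<Rightarrow> (nat \<Rightarrow> complex vec) \<Rightarrow> (nat \<Rightarrow> complex) \<Rightarrow> complex mat" where
  "spectral_sum d e c = mat d d (\<lambda>(a,b). \<Sum>k<d. c k * (e k $ a) * cnj (e k $ b))"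

definition unitary_mat :: "nat \<Rightarrow> complex mat \<Rightarrow> bool" where
  "unitary_mat d U \<longleftrightarrow> U \<in> carrier_mat d d \<and> U * adj U = 1\<^sub>m d \<and> adj U * U = 1\<^sub>m d"

definition psd :: "nat \<Rightarrow> complex mat \<Rightarrow> bool" where
  "psd d A \<longleftrightarrow> A \<in> carrier_mat d d \<and>
     (\<forall>v \<in> carrier_vec d. Im (cinner v (A *\<^sub>v v)) = 0 \<and> 0 \<le> Re (cinner v (A *\<^sub>v v)))"

definition density :: "nat \<Rightarrow> complex mat \<Rightarrow> bool" where
  "density d \<rho> \<longleftrightarrow> psd d \<rho> \<and> mtrace \<rho> = 1"

text \<open>Ergotropy: max over d x d unitaries of tr(rho H) - tr(H U rho U^dagger)
  (these traces are real for Hermitian H and rho; we take real parts).\<close>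
definition ergotropy :: "nat \<Rightarrow> complex mat \<Rightarrow> complex mat \<Rightarrow> real" where
  "ergotropy d \<rho> H = (SUP U \<in> {U. unitary_mat d U}.
      Re (mtrace (\<rho> * H)) - Re (mtrace (H * (U * \<rho> * adj U))))"

definition dephase :: "nat \<Rightarrow> (nat \<Rightarrow> complex vec) \<Rightarrow> complex mat \<Rightarrow> complex mat" where
  "dephase d e X = spectral_sum d e (\<lambda>i. cinner (e i) (X *\<^sub>v e i))"

definition incoherent_ergotropy ::
  "nat \<Rightarrow> (nat \<Rightarrow> complex vec) \<Rightarrow> complex mat \<Rightarrow> complex mat \<Rightarrow> real" where
  "incoherent_ergotropy d e H X = ergotropy d (dephase d e X) H"

definition decr_rearr :: "nat \<Rightarrow> (nat \<Rightarrow> real) \<Rightarrow> real list" where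
  "decr_rearr d p = rev (sort (map p [0..<d]))"

end

theory Submission
  imports Defs "Jordan_Normal_Form.Determinant" "HOL-Combinatorics.Permutations"
begin

(* Conjugation by the unitary E whose columns are the eigenvectors e_i leaves ergotropies unchanged
   and turns H into D = diag(eps), rho into diag(p), and every omega in Omega into a matrix with
   diagonal p.  For a diagonal state, tr(D W diag(p) W^dagger) = sum_{i,k} eps_i |W_ik|^2 p_k; as
   (|W_ik|^2) is doubly stochastic, Abel summation bounds this below by sum_i eps_i p_i^down, with
   equality for a permutation matrix.  For a general omega with diagonal p, diag(p) arises from omega
   by successively averaging over conjugation with the sign flips diag(1,..,-1,..,1); the energy being
   linear in the state, some unitary conjugate of omega has energy at most that of any given conjugate
   of diag(p).  Since tr(omega H) = sum_i p_i eps_i on all of Omega, the ergotropy is minimal at rho. *)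

section \<open>Rearrangement inequality for doubly stochastic matrices\<close>

lemma sum_smallest_le_weighted_sum:
  fixes c p r :: "nat \<Rightarrow> real"
  assumes \<sigma>: "\<sigma> permutes {..<d}" and r_p: "\<And>i. i < d \<Longrightarrow> r i = p (\<sigma> i)"
    and r_antimono: "\<And>i j. i \<le> j \<Longrightarrow> j < d \<Longrightarrow> r j \<le> r i"
    and c_bounds: "\<And>k. k < d \<Longrightarrow> 0 \<le> c k \<and> c k \<le> 1"
    and c_sum: "(\<Sum>k<d. c k) = real (d - m)" and "m \<le> d"
  shows "(\<Sum>i\<in>{m..<d}. r i) \<le> (\<Sum>k<d. c k * p k)"
proof (cases "m = d")
  case True
  then have "\<forall>k\<in>{..<d}. c k = 0"
    using c_sum c_bounds by (subst sum_nonneg_eq_0_iff[symmetric]) auto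
  then show ?thesis using True by simp
next
  case False
  with \<open>m \<le> d\<close> have "m < d" by simp
  \<comment> \<open>With the threshold t = r m: c k * (p k - t) \<ge> min 0 (p k - t), and these minima
     add up to exactly the tail sum of r minus (d - m) t.\<close>
  define t where "t = r m"
  have "(\<Sum>k<d. c k * p k) = (\<Sum>k<d. c k * (p k - t)) + t * (\<Sum>k<d. c k)"
    by (simp add: algebra_simps sum.distrib sum_distrib_left sum_subtractf)
  then have shift: "(\<Sum>k<d. c k * p k) = (\<Sum>k<d. c k * (p k - t)) + real (d - m) * t"
    using c_sum by simp
  have "(\<Sum>k<d. min 0 (p k - t)) \<le> (\<Sum>k<d. c k * (p k - t))"
  proof (rule sum_mono)
    fix k assume "k \<in> {..<d}"
    then have "0 \<le> c k" "c k \<le> 1" using c_bounds by auto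
    then show "min 0 (p k - t) \<le> c k * (p k - t)"
      using mult_right_mono_neg[of "c k" 1 "p k - t"] by (cases "t \<le> p k") auto
  qed
  moreover have "(\<Sum>k<d. min 0 (p k - t)) = (\<Sum>i<d. min 0 (r i - t))"
    using sum.reindex_bij_betw[OF permutes_imp_bij[OF \<sigma>], of "\<lambda>k. min 0 (p k - t)"] r_p by simp
  moreover have "(\<Sum>i<d. min 0 (r i - t)) = (\<Sum>i<m. min 0 (r i - t)) + (\<Sum>i\<in>{m..<d}. min 0 (r i - t))"
    using \<open>m \<le> d\<close> by (metis atLeast0LessThan sum.atLeastLessThan_concat zero_le)
  moreover have "(\<Sum>i<m. min 0 (r i - t)) = 0"
    using r_antimono \<open>m < d\<close> by (auto simp: t_def intro!: sum.neutral)
  moreover have "(\<Sum>i\<in>{m..<d}. min 0 (r i - t)) = (\<Sum>i\<in>{m..<d}. r i) - real (d - m) * t"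
    using r_antimono by (auto simp: t_def sum_subtractf intro!: sum.cong)
  ultimately show ?thesis using shift by linarith
qed

lemma weighted_sum_nonneg_of_tail_sums_nonneg:
  fixes x eps :: "nat \<Rightarrow> real"
  assumes eps_mono: "\<And>i j. i \<le> j \<Longrightarrow> j < d \<Longrightarrow> eps i \<le> eps j"
    and tails: "\<And>m. m \<le> d \<Longrightarrow> 0 \<le> (\<Sum>i\<in>{m..<d}. x i)"
    and total: "(\<Sum>i<d. x i) = 0"
  shows "0 \<le> (\<Sum>i<d. eps i * x i)"
proof (cases "d = 0")
  case False
  have tail_bound: "eps n * (\<Sum>i\<in>{n..<d}. x i) \<le> (\<Sum>i\<in>{n..<d}. eps i * x i)" if "n \<le> d - 1" for n
    using that
  proof (induction n rule: inc_induct)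
    case base
    have "{d - 1..<d} = {d - 1}" using False by auto
    then show ?case by simp
  next
    case (step n)
    have split: "(\<Sum>i\<in>{n..<d}. f i) = f n + (\<Sum>i\<in>{Suc n..<d}. f i)" for f :: "nat \<Rightarrow> real"
      using step(2) False by (subst sum.atLeast_Suc_lessThan) auto
    have "eps n * (\<Sum>i\<in>{Suc n..<d}. x i) \<le> eps (Suc n) * (\<Sum>i\<in>{Suc n..<d}. x i)"
      using tails[of "Suc n"] eps_mono[of n "Suc n"] step(2) False by (intro mult_right_mono) auto
    then show ?case using step(3) unfolding split[of x] split[of "\<lambda>i. eps i * x i"]
      by (simp add: algebra_simps)
  qed
  show ?thesis using tail_bound[of 0] total by (simp add: atLeast0LessThan)
qed simp

lemma rearrangement_le_doubly_stochastic:
  fixes B :: "nat \<Rightarrow> nat \<Rightarrow> real" and eps p r :: "nat \<Rightarrow> real"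
  assumes B_nonneg: "\<And>i k. i < d \<Longrightarrow> k < d \<Longrightarrow> 0 \<le> B i k"
    and B_rows: "\<And>i. i < d \<Longrightarrow> (\<Sum>k<d. B i k) = 1"
    and B_cols: "\<And>k. k < d \<Longrightarrow> (\<Sum>i<d. B i k) = 1"
    and eps_mono: "\<And>i j. i \<le> j \<Longrightarrow> j < d \<Longrightarrow> eps i \<le> eps j"
    and \<sigma>: "\<sigma> permutes {..<d}" and r_p: "\<And>i. i < d \<Longrightarrow> r i = p (\<sigma> i)"
    and r_antimono: "\<And>i j. i \<le> j \<Longrightarrow> j < d \<Longrightarrow> r j \<le> r i"
  shows "(\<Sum>i<d. eps i * r i) \<le> (\<Sum>i<d. \<Sum>k<d. eps i * B i k * p k)"
proof -
  define x where "x i = (\<Sum>k<d. B i k * p k) - r i" for i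
  have "(\<Sum>i<d. \<Sum>k<d. B i k * p k) = (\<Sum>k<d. \<Sum>i<d. B i k * p k)" by (rule sum.swap)
  also have "\<dots> = (\<Sum>k<d. p k)" using B_cols by (simp add: sum_distrib_right[symmetric])
  also have "\<dots> = (\<Sum>i<d. r i)"
    using sum.reindex_bij_betw[OF permutes_imp_bij[OF \<sigma>], of p] r_p by simp
  finally have total: "(\<Sum>i<d. x i) = 0" by (simp add: x_def sum_subtractf)
  have tails: "0 \<le> (\<Sum>i\<in>{m..<d}. x i)" if "m \<le> d" for m
  proof -
    define c where "c k = (\<Sum>i\<in>{m..<d}. B i k)" for k
    have c_bounds: "0 \<le> c k \<and> c k \<le> 1" if "k < d" for k
    proof
      show "0 \<le> c k" unfolding c_def using B_nonneg that by (intro sum_nonneg) auto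
      have "c k \<le> (\<Sum>i<d. B i k)" unfolding c_def using B_nonneg that by (intro sum_mono2) auto
      then show "c k \<le> 1" using B_cols that by simp
    qed
    have "(\<Sum>k<d. c k) = (\<Sum>i\<in>{m..<d}. \<Sum>k<d. B i k)" unfolding c_def by (rule sum.swap)
    then have c_sum: "(\<Sum>k<d. c k) = real (d - m)" using B_rows by simp
    have "(\<Sum>i\<in>{m..<d}. \<Sum>k<d. B i k * p k) = (\<Sum>k<d. c k * p k)"
      unfolding c_def by (subst sum.swap) (simp add: sum_distrib_right)
    then show ?thesis
      using sum_smallest_le_weighted_sum[of \<sigma> d r p c m, OF \<sigma> r_p r_antimono c_bounds c_sum]
        \<open>m \<le> d\<close>
      by (simp add: x_def sum_subtractf)
  qed
  have "0 \<le> (\<Sum>i<d. eps i * x i)"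
    by (rule weighted_sum_nonneg_of_tail_sums_nonneg[OF eps_mono tails total])
  then show ?thesis by (simp add: x_def algebra_simps sum_subtractf sum_distrib_left)
qed

lemma decr_rearr_antimono: "i \<le> j \<Longrightarrow> j < d \<Longrightarrow> decr_rearr d p ! j \<le> decr_rearr d p ! i"
  using sorted_rev_nth_mono[of "decr_rearr d p"] by (simp add: decr_rearr_def)

lemma decr_rearr_permutes:
  obtains \<sigma> where "\<sigma> permutes {..<d}" "\<And>i. i < d \<Longrightarrow> decr_rearr d p ! i = p (\<sigma> i)"
proof -
  have "mset (decr_rearr d p) = mset (map p [0..<d])" by (simp add: decr_rearr_def)
  then obtain \<sigma> where \<sigma>: "\<sigma> permutes {..<length (map p [0..<d])}"
    and \<sigma>_sorts: "permute_list \<sigma> (map p [0..<d]) = decr_rearr d p"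
    using mset_eq_permutation by blast
  have "decr_rearr d p ! i = p (\<sigma> i)" if "i < d" for i
  proof -
    have "\<sigma> i < d" using permutes_in_image[OF \<sigma>] that by simp
    then show ?thesis using permute_list_nth[OF \<sigma>, of i] \<sigma>_sorts that by simp
  qed
  with \<sigma> show thesis using that by simp
qed

lemma mult_carrier_mat_square [simp]:
  "A \<in> carrier_mat d d \<Longrightarrow> B \<in> carrier_mat d d \<Longrightarrow> A * B \<in> carrier_mat d d"
  by (rule mult_carrier_mat)

lemma adj_dim [simp]: "dim_row (adj A) = dim_col A" "dim_col (adj A) = dim_row A"
  by (auto simp: adj_def)

lemma adj_carrier_mat [simp]: "A \<in> carrier_mat n m \<Longrightarrow> adj A \<in> carrier_mat m n"
  unfolding carrier_mat_def by simp

lemma adj_index [simp]: "i < dim_col A \<Longrightarrow> j < dim_row A \<Longrightarrow> adj A $$ (i,j) = cnj (A $$ (j,i))"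
  by (auto simp: adj_def)

lemma adj_adj [simp]: "adj (adj A) = A"
  by (rule eq_matI) auto

lemma adj_one [simp]: "adj (1\<^sub>m n) = 1\<^sub>m n"
  by (rule eq_matI) auto

lemma adj_mult:
  "A \<in> carrier_mat n m \<Longrightarrow> B \<in> carrier_mat m k \<Longrightarrow> adj (A * B) = adj B * adj A"
  by (intro eq_matI) (auto simp: scalar_prod_def mult.commute)

lemma mtrace_mult_comm:
  assumes "A \<in> carrier_mat n m" "B \<in> carrier_mat m n"
  shows "mtrace (A * B) = mtrace (B * A)"
proof -
  have "mtrace (A * B) = (\<Sum>i<n. \<Sum>k<m. A $$ (i,k) * B $$ (k,i))"
    using assms by (simp add: mtrace_def scalar_prod_def atLeast0LessThan)
  also have "\<dots> = (\<Sum>k<m. \<Sum>i<n. B $$ (k,i) * A $$ (i,k))"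
    by (subst sum.swap) (simp add: mult.commute)
  also have "\<dots> = mtrace (B * A)"
    using assms by (simp add: mtrace_def scalar_prod_def atLeast0LessThan)
  finally show ?thesis .
qed

lemma unitary_matI:
  assumes "U \<in> carrier_mat d d" "adj U * U = 1\<^sub>m d"
  shows "unitary_mat d U"
  using assms mat_mult_left_right_inverse[of "adj U" d U] by (simp add: unitary_mat_def)

lemma unitary_mat_one: "unitary_mat d (1\<^sub>m d)"
  by (simp add: unitary_mat_def)

lemma unitary_mat_adj: "unitary_mat d U \<Longrightarrow> unitary_mat d (adj U)"
  by (auto simp: unitary_mat_def)

lemma unitary_mat_cancel:
  assumes "unitary_mat d U" "A \<in> carrier_mat d d"
  shows "U * (adj U * A) = A" "adj U * (U * A) = A"
proof -
  have "U \<in> carrier_mat d d" using assms by (simp add: unitary_mat_def)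
  then have "U * (adj U * A) = (U * adj U) * A" "adj U * (U * A) = (adj U * U) * A"
    using assms by (simp_all add: assoc_mult_mat[of _ d d _ d _ d])
  then show "U * (adj U * A) = A" "adj U * (U * A) = A"
    using assms by (simp_all add: unitary_mat_def)
qed

lemma unitary_mat_mult:
  assumes "unitary_mat d U" "unitary_mat d V"
  shows "unitary_mat d (U * V)"
proof -
  have U: "U \<in> carrier_mat d d" and V: "V \<in> carrier_mat d d"
    using assms by (auto simp: unitary_mat_def)
  then have "adj (U * V) * (U * V) = adj V * (adj U * (U * V))"
    by (simp add: adj_mult assoc_mult_mat[of _ d d _ d _ d])
  also have "\<dots> = 1\<^sub>m d"
    using unitary_mat_cancel(2)[OF assms(1) V] assms(2) by (simp add: unitary_mat_def)
  finally show ?thesis using U V by (intro unitary_matI) auto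
qed

lemma mtrace_unitary_conj:
  assumes U: "unitary_mat d U" and A: "A \<in> carrier_mat d d"
  shows "mtrace (adj U * A * U) = mtrace A"
proof -
  have Uc: "U \<in> carrier_mat d d" using U by (simp add: unitary_mat_def)
  then have "mtrace (adj U * A * U) = mtrace (adj U * (A * U))"
    using A by (simp add: assoc_mult_mat[of _ d d _ d _ d])
  also have "\<dots> = mtrace ((A * U) * adj U)" using A Uc by (intro mtrace_mult_comm) auto
  also have "\<dots> = mtrace (A * (U * adj U))"
    using A Uc by (simp add: assoc_mult_mat[of A d d U d "adj U" d])
  also have "\<dots> = mtrace A" using A U by (simp add: unitary_mat_def)
  finally show ?thesis .
qed

lemma unitary_mat_row_norm:
  assumes U: "unitary_mat d W" and i: "i < d"
  shows "(\<Sum>k<d. (cmod (W $$ (i,k)))\<^sup>2) = 1"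
proof -
  have W: "W \<in> carrier_mat d d" using U by (simp add: unitary_mat_def)
  have "1 = (W * adj W) $$ (i,i)" using U i by (simp add: unitary_mat_def)
  also have "\<dots> = (\<Sum>k<d. W $$ (i,k) * cnj (W $$ (i,k)))"
    using W i by (simp add: scalar_prod_def atLeast0LessThan)
  also have "\<dots> = complex_of_real (\<Sum>k<d. (cmod (W $$ (i,k)))\<^sup>2)"
    by (simp add: complex_norm_square[symmetric])
  finally show ?thesis by (metis of_real_eq_1_iff)
qed

lemma unitary_mat_col_norm:
  assumes U: "unitary_mat d W" and k: "k < d"
  shows "(\<Sum>i<d. (cmod (W $$ (i,k)))\<^sup>2) = 1"
proof -
  have W: "W \<in> carrier_mat d d" using U by (simp add: unitary_mat_def)
  have "1 = (adj W * W) $$ (k,k)" using U k by (simp add: unitary_mat_def)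
  also have "\<dots> = (\<Sum>i<d. W $$ (i,k) * cnj (W $$ (i,k)))"
    using W k by (simp add: scalar_prod_def atLeast0LessThan mult.commute)
  also have "\<dots> = complex_of_real (\<Sum>i<d. (cmod (W $$ (i,k)))\<^sup>2)"
    by (simp add: complex_norm_square[symmetric])
  finally show ?thesis by (metis of_real_eq_1_iff)
qed

lemma unitary_mat_entry_norm_le_1:
  assumes U: "unitary_mat d W" and "i < d" "k < d"
  shows "cmod (W $$ (i,k)) \<le> 1"
proof -
  have "(cmod (W $$ (i,k)))\<^sup>2 \<le> (\<Sum>k'<d. (cmod (W $$ (i,k')))\<^sup>2)"
    using \<open>k < d\<close> by (intro member_le_sum) auto
  then have "(cmod (W $$ (i,k)))\<^sup>2 \<le> 1\<^sup>2" using unitary_mat_row_norm[OF U \<open>i < d\<close>] by simp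
  then show ?thesis by (rule power2_le_imp_le) simp
qed

lemma ergotropy_le:
  assumes "\<And>U. unitary_mat d U \<Longrightarrow> c \<le> Re (mtrace (H * (U * A * adj U)))"
  shows "ergotropy d A H \<le> Re (mtrace (A * H)) - c"
  unfolding ergotropy_def
proof (rule cSUP_least)
  show "{U. unitary_mat d U} \<noteq> {}" using unitary_mat_one by blast
qed (use assms in force)

lemma ergotropy_unitary_conj:
  assumes E: "unitary_mat d E" and \<omega>: "\<omega> \<in> carrier_mat d d" and H: "H \<in> carrier_mat d d"
  shows "ergotropy d (adj E * \<omega> * E) (adj E * H * E) = ergotropy d \<omega> H"
proof -
  define c where "c X = adj E * X * E" for X
  have Ec: "E \<in> carrier_mat d d" using E by (simp add: unitary_mat_def)
  have c_carrier: "c X \<in> carrier_mat d d" if "X \<in> carrier_mat d d" for X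
    using that Ec by (simp add: c_def)
  have c_mult: "c X * c Y = c (X * Y)" if "X \<in> carrier_mat d d" "Y \<in> carrier_mat d d" for X Y
    using that Ec by (simp add: c_def assoc_mult_mat[of _ d d _ d _ d] unitary_mat_cancel[OF E])
  have c_adj: "adj (c V) = c (adj V)" if "V \<in> carrier_mat d d" for V
    using that Ec by (simp add: c_def adj_mult[of _ d d _ d] assoc_mult_mat[of _ d d _ d _ d])
  have c_unitary: "unitary_mat d (c V)" if "unitary_mat d V" for V
    unfolding c_def using that E by (intro unitary_mat_mult unitary_mat_adj)
  have c_surj: "c ` {U. unitary_mat d U} = {U. unitary_mat d U}"
  proof (intro equalityI subsetI)
    fix W assume "W \<in> {U. unitary_mat d U}"
    then have W: "unitary_mat d W" "W \<in> carrier_mat d d" by (auto simp: unitary_mat_def)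
    have "c (E * W * adj E) = W"
      using W(2) Ec E by (simp add: c_def assoc_mult_mat[of _ d d _ d _ d] unitary_mat_cancel[OF E])
        (simp add: unitary_mat_def)
    moreover have "unitary_mat d (E * W * adj E)"
      using E W by (intro unitary_mat_mult unitary_mat_adj)
    ultimately show "W \<in> c ` {U. unitary_mat d U}" by (metis imageI mem_Collect_eq)
  qed (use c_unitary in auto)
  have rotated: "mtrace (c H * (c V * c \<omega> * adj (c V))) = mtrace (H * (V * \<omega> * adj V))"
    if "V \<in> carrier_mat d d" for V
    using that \<omega> H by (simp add: c_adj c_mult c_carrier mtrace_unitary_conj[OF E, folded c_def])
  have initial: "mtrace (c \<omega> * c H) = mtrace (\<omega> * H)"
    using \<omega> H by (simp add: c_mult mtrace_unitary_conj[OF E, folded c_def])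
  have "ergotropy d (c \<omega>) (c H) = (SUP U \<in> c ` {U. unitary_mat d U}.
      Re (mtrace (c \<omega> * c H)) - Re (mtrace (c H * (U * c \<omega> * adj U))))"
    unfolding ergotropy_def c_surj ..
  also have "\<dots> = (SUP V \<in> {U. unitary_mat d U}.
      Re (mtrace (c \<omega> * c H)) - Re (mtrace (c H * (c V * c \<omega> * adj (c V)))))"
    by (simp add: image_comp)
  also have "\<dots> = ergotropy d \<omega> H"
    unfolding ergotropy_def initial using rotated by (intro SUP_cong) (auto simp: unitary_mat_def)
  finally show ?thesis unfolding c_def .
qed

section \<open>The eigenbasis as a unitary matrix\<close>

definition basis_mat :: "nat \<Rightarrow> (nat \<Rightarrow> complex vec) \<Rightarrow> complex mat" where
  "basis_mat d e = mat d d (\<lambda>(a,k). e k $ a)"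

abbreviation real_spectral_sum ::
    "nat \<Rightarrow> (nat \<Rightarrow> complex vec) \<Rightarrow> (nat \<Rightarrow> real) \<Rightarrow> complex mat" where
  "real_spectral_sum d e f \<equiv> spectral_sum d e (\<lambda>k. complex_of_real (f k))"

lemma basis_mat_dim [simp]: "dim_row (basis_mat d e) = d" "dim_col (basis_mat d e) = d"
  by (simp_all add: basis_mat_def)

lemma basis_mat_carrier [simp]: "basis_mat d e \<in> carrier_mat d d"
  by (simp add: basis_mat_def)

lemma spectral_sum_carrier [simp]: "spectral_sum d e c \<in> carrier_mat d d"
  by (simp add: spectral_sum_def)

lemma spectral_sum_cong:
  "(\<And>k. k < d \<Longrightarrow> c k = c' k) \<Longrightarrow> spectral_sum d e c = spectral_sum d e c'"
  unfolding spectral_sum_def by (intro eq_matI) auto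

lemma basis_mat_unitary:
  assumes e_dim: "\<And>i. i < d \<Longrightarrow> e i \<in> carrier_vec d"
    and e_orthonormal: "\<And>i j. i < d \<Longrightarrow> j < d \<Longrightarrow> cinner (e i) (e j) = (if i = j then 1 else 0)"
  shows "unitary_mat d (basis_mat d e)"
proof (rule unitary_matI)
  show "adj (basis_mat d e) * basis_mat d e = 1\<^sub>m d"
  proof (rule eq_matI)
    fix i j assume "i < dim_row (1\<^sub>m d :: complex mat)" "j < dim_col (1\<^sub>m d :: complex mat)"
    then have ij: "i < d" "j < d" by simp_all
    then have "(adj (basis_mat d e) * basis_mat d e) $$ (i,j) = (\<Sum>a<d. cnj (e i $ a) * e j $ a)"
      by (simp add: basis_mat_def scalar_prod_def atLeast0LessThan)
    also have "\<dots> = cinner (e i) (e j)" using e_dim[OF ij(2)] by (simp add: cinner_def)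
    finally show "(adj (basis_mat d e) * basis_mat d e) $$ (i,j) = 1\<^sub>m d $$ (i,j)"
      using e_orthonormal ij by simp
  qed auto
qed simp

lemma spectral_sum_basis_mat:
  "spectral_sum d e c = basis_mat d e * mat_diag d c * adj (basis_mat d e)"
proof (rule eq_matI)
  fix a b assume "a < dim_row (basis_mat d e * mat_diag d c * adj (basis_mat d e))"
    "b < dim_col (basis_mat d e * mat_diag d c * adj (basis_mat d e))"
  moreover have "basis_mat d e * mat_diag d c = mat d d (\<lambda>(i,j). basis_mat d e $$ (i,j) * c j)"
    by (rule mat_diag_mult_right) simp
  ultimately show "spectral_sum d e c $$ (a,b) = (basis_mat d e * mat_diag d c * adj (basis_mat d e)) $$ (a,b)"
    by (simp add: spectral_sum_def basis_mat_def scalar_prod_def atLeast0LessThan mult_ac)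
qed (auto simp: spectral_sum_def)

lemma basis_conj_spectral_sum:
  assumes "unitary_mat d (basis_mat d e)"
  shows "adj (basis_mat d e) * spectral_sum d e c * basis_mat d e = mat_diag d c"
  using assms unfolding spectral_sum_basis_mat
  by (simp add: assoc_mult_mat[of _ d d _ d _ d] unitary_mat_cancel)
    (simp add: unitary_mat_def right_mult_one_mat[OF mat_diag_dim])

lemma basis_conj_diag_entry:
  assumes e_dim: "\<And>i. i < d \<Longrightarrow> e i \<in> carrier_vec d"
    and \<omega>: "\<omega> \<in> carrier_mat d d" and i: "i < d"
  shows "cinner (e i) (\<omega> *\<^sub>v e i) = (adj (basis_mat d e) * \<omega> * basis_mat d e) $$ (i,i)"
    and "mtrace (\<omega> * proj (e i)) = (adj (basis_mat d e) * \<omega> * basis_mat d e) $$ (i,i)"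
    and "mtrace (proj (e i) * \<omega>) = (adj (basis_mat d e) * \<omega> * basis_mat d e) $$ (i,i)"
proof -
  have ei: "e i \<in> carrier_vec d" using e_dim[OF i] .
  have "(adj (basis_mat d e) * \<omega> * basis_mat d e) $$ (i,i)
      = (\<Sum>b<d. (\<Sum>a<d. cnj (e i $ a) * \<omega> $$ (a,b)) * e i $ b)"
    using \<omega> i by (simp add: basis_mat_def scalar_prod_def atLeast0LessThan)
  also have "\<dots> = (\<Sum>a<d. \<Sum>b<d. cnj (e i $ a) * \<omega> $$ (a,b) * e i $ b)"
    by (subst sum.swap) (simp add: sum_distrib_right)
  finally have entry: "(adj (basis_mat d e) * \<omega> * basis_mat d e) $$ (i,i)
      = (\<Sum>a<d. \<Sum>b<d. cnj (e i $ a) * \<omega> $$ (a,b) * e i $ b)" .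
  show "cinner (e i) (\<omega> *\<^sub>v e i) = (adj (basis_mat d e) * \<omega> * basis_mat d e) $$ (i,i)"
    unfolding entry using \<omega> ei
    by (simp add: cinner_def scalar_prod_def atLeast0LessThan sum_distrib_left mult.assoc)
  show proj_right: "mtrace (\<omega> * proj (e i)) = (adj (basis_mat d e) * \<omega> * basis_mat d e) $$ (i,i)"
    unfolding entry using \<omega> ei
    by (simp add: mtrace_def proj_def scalar_prod_def atLeast0LessThan mult_ac)
  have "proj (e i) \<in> carrier_mat d d" using ei by (simp add: proj_def)
  then show "mtrace (proj (e i) * \<omega>) = (adj (basis_mat d e) * \<omega> * basis_mat d e) $$ (i,i)"
    using proj_right mtrace_mult_comm[OF _ \<omega>] by metis
qed

lemma psd_spectral_sum:
  assumes p_nonneg: "\<And>k. k < d \<Longrightarrow> 0 \<le> p k"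
  shows "psd d (real_spectral_sum d e p)"
  unfolding psd_def
proof (intro conjI ballI)
  show "real_spectral_sum d e p \<in> carrier_mat d d" by simp
  fix v :: "complex vec" assume v: "v \<in> carrier_vec d"
  define z where "z k = (\<Sum>b<d. cnj (e k $ b) * v $ b)" for k
  have "cinner v (real_spectral_sum d e p *\<^sub>v v) =
     (\<Sum>a<d. cnj (v $ a) * (\<Sum>b<d. (\<Sum>k<d. complex_of_real (p k) * e k $ a * cnj (e k $ b)) * v $ b))"
    using v by (simp add: cinner_def spectral_sum_def scalar_prod_def atLeast0LessThan)
  also have "\<dots> = (\<Sum>a<d. \<Sum>b<d. \<Sum>k<d.
      complex_of_real (p k) * (cnj (v $ a) * e k $ a) * (cnj (e k $ b) * v $ b))"
    by (simp add: sum_distrib_left sum_distrib_right mult_ac)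
  also have "\<dots> = (\<Sum>k<d. \<Sum>a<d. \<Sum>b<d.
      complex_of_real (p k) * (cnj (v $ a) * e k $ a) * (cnj (e k $ b) * v $ b))"
    by (subst sum.swap, subst (2) sum.swap, rule refl)
  also have "\<dots> = (\<Sum>k<d. complex_of_real (p k) * (z k * cnj (z k)))"
    by (simp add: z_def sum_distrib_left sum_distrib_right mult_ac)
  also have "\<dots> = complex_of_real (\<Sum>k<d. p k * (cmod (z k))\<^sup>2)"
    by (simp only: complex_norm_square of_real_mult of_real_sum)
  finally have quadratic_form:
    "cinner v (real_spectral_sum d e p *\<^sub>v v) = complex_of_real (\<Sum>k<d. p k * (cmod (z k))\<^sup>2)" .
  show "Im (cinner v (real_spectral_sum d e p *\<^sub>v v)) = 0"
    unfolding quadratic_form by simp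
  show "0 \<le> Re (cinner v (real_spectral_sum d e p *\<^sub>v v))"
    unfolding quadratic_form using p_nonneg by (auto intro!: sum_nonneg)
qed

section \<open>Ergotropy for a diagonal Hamiltonian\<close>

abbreviation real_diag_mat :: "nat \<Rightarrow> (nat \<Rightarrow> real) \<Rightarrow> complex mat" where
  "real_diag_mat d f \<equiv> mat_diag d (\<lambda>k. complex_of_real (f k))"

lemma mtrace_mult_mat_diag:
  assumes "A \<in> carrier_mat d d"
  shows "mtrace (A * mat_diag d f) = (\<Sum>k<d. A $$ (k,k) * f k)"
  using mat_diag_mult_right[OF assms] by (simp add: mtrace_def)

lemma mtrace_mat_diag_conj:
  assumes W: "W \<in> carrier_mat d d" and M: "M \<in> carrier_mat d d"
  shows "mtrace (mat_diag d f * (W * M * adj W)) =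
    (\<Sum>i<d. \<Sum>a<d. \<Sum>b<d. f i * W $$ (i,a) * M $$ (a,b) * cnj (W $$ (i,b)))"
proof -
  have "W * M * adj W \<in> carrier_mat d d" using W M by simp
  from mat_diag_mult_left[OF this]
  have "mtrace (mat_diag d f * (W * M * adj W)) = (\<Sum>i<d. f i * (W * M * adj W) $$ (i,i))"
    by (simp add: mtrace_def)
  also have "\<dots> = (\<Sum>i<d. f i * (\<Sum>b<d. (\<Sum>a<d. W $$ (i,a) * M $$ (a,b)) * cnj (W $$ (i,b))))"
    using W M by (intro sum.cong refl) (simp add: scalar_prod_def atLeast0LessThan)
  also have "\<dots> = (\<Sum>i<d. \<Sum>b<d. \<Sum>a<d. f i * W $$ (i,a) * M $$ (a,b) * cnj (W $$ (i,b)))"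
    by (simp add: sum_distrib_left sum_distrib_right mult.assoc)
  also have "\<dots> = (\<Sum>i<d. \<Sum>a<d. \<Sum>b<d. f i * W $$ (i,a) * M $$ (a,b) * cnj (W $$ (i,b)))"
    by (intro sum.cong refl sum.swap)
  finally show ?thesis .
qed

lemma mtrace_real_diag_conj_real_diag:
  assumes W: "W \<in> carrier_mat d d"
  shows "mtrace (real_diag_mat d eps * (W * real_diag_mat d p * adj W)) =
    complex_of_real (\<Sum>i<d. \<Sum>k<d. eps i * (cmod (W $$ (i,k)))\<^sup>2 * p k)"
proof -
  have diag_only: "(\<Sum>b<d. complex_of_real (eps i) * W $$ (i,a) * real_diag_mat d p $$ (a,b) * cnj (W $$ (i,b)))
      = complex_of_real (eps i * (cmod (W $$ (i,a)))\<^sup>2 * p a)" if "a < d" for i a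
  proof -
    have "(\<Sum>b<d. complex_of_real (eps i) * W $$ (i,a) * real_diag_mat d p $$ (a,b) * cnj (W $$ (i,b)))
        = (\<Sum>b<d. if b = a then complex_of_real (eps i) * complex_of_real (p a) * (W $$ (i,a) * cnj (W $$ (i,a))) else 0)"
      using that by (intro sum.cong refl) (auto simp: mat_diag_def)
    then show ?thesis using that by (simp add: complex_norm_square[symmetric])
  qed
  show ?thesis
    unfolding mtrace_mat_diag_conj[OF W mat_diag_dim] by (simp add: diag_only)
qed

lemma ergotropy_real_diag_bdd_above:
  assumes A: "A \<in> carrier_mat d d"
  shows "bdd_above ((\<lambda>W. Re (mtrace (A * real_diag_mat d eps)) -
    Re (mtrace (real_diag_mat d eps * (W * A * adj W)))) ` {W. unitary_mat d W})"
proof (rule bdd_aboveI2)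
  fix W assume "W \<in> {W. unitary_mat d W}"
  then have U: "unitary_mat d W" and W: "W \<in> carrier_mat d d" by (simp_all add: unitary_mat_def)
  let ?t = "\<lambda>i a b. complex_of_real (eps i) * W $$ (i,a) * A $$ (a,b) * cnj (W $$ (i,b))"
  have "- Re (mtrace (real_diag_mat d eps * (W * A * adj W))) \<le> cmod (mtrace (real_diag_mat d eps * (W * A * adj W)))"
    by (metis abs_Re_le_cmod abs_le_iff)
  also have "\<dots> = cmod (\<Sum>i<d. \<Sum>a<d. \<Sum>b<d. ?t i a b)" by (simp only: mtrace_mat_diag_conj[OF W A])
  also have "\<dots> \<le> (\<Sum>i<d. cmod (\<Sum>a<d. \<Sum>b<d. ?t i a b))" by (rule norm_sum)
  also have "\<dots> \<le> (\<Sum>i<d. \<Sum>a<d. cmod (\<Sum>b<d. ?t i a b))" by (intro sum_mono norm_sum)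
  also have "\<dots> \<le> (\<Sum>i<d. \<Sum>a<d. \<Sum>b<d. cmod (?t i a b))" by (intro sum_mono norm_sum)
  also have "\<dots> \<le> (\<Sum>i<d. \<Sum>a<d. \<Sum>b<d. \<bar>eps i\<bar> * cmod (A $$ (a,b)))"
  proof (intro sum_mono)
    fix i a b assume "i \<in> {..<d}" "a \<in> {..<d}" "b \<in> {..<d}"
    then have "\<bar>eps i\<bar> * cmod (W $$ (i,a)) * cmod (A $$ (a,b)) * cmod (W $$ (i,b))
        \<le> \<bar>eps i\<bar> * 1 * cmod (A $$ (a,b)) * 1"
      using unitary_mat_entry_norm_le_1[OF U] by (intro mult_mono) (auto simp: mult_nonneg_nonneg)
    then show "cmod (?t i a b) \<le> \<bar>eps i\<bar> * cmod (A $$ (a,b))" by (simp add: norm_mult)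
  qed
  finally show "Re (mtrace (A * real_diag_mat d eps)) - Re (mtrace (real_diag_mat d eps * (W * A * adj W)))
      \<le> Re (mtrace (A * real_diag_mat d eps)) + (\<Sum>i<d. \<Sum>a<d. \<Sum>b<d. \<bar>eps i\<bar> * cmod (A $$ (a,b)))"
    by simp
qed

lemma ergotropy_real_diag_ge:
  assumes "unitary_mat d W" "A \<in> carrier_mat d d"
  shows "Re (mtrace (A * real_diag_mat d eps)) - Re (mtrace (real_diag_mat d eps * (W * A * adj W)))
    \<le> ergotropy d A (real_diag_mat d eps)"
  unfolding ergotropy_def
  using assms by (intro cSUP_upper ergotropy_real_diag_bdd_above) auto

definition perm_mat :: "nat \<Rightarrow> (nat \<Rightarrow> nat) \<Rightarrow> complex mat" where
  "perm_mat d \<sigma> = mat d d (\<lambda>(i,k). if k = \<sigma> i then 1 else 0)"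

lemma perm_mat_unitary:
  assumes \<sigma>: "\<sigma> permutes {..<d}"
  shows "unitary_mat d (perm_mat d \<sigma>)"
proof (rule unitary_matI)
  show "adj (perm_mat d \<sigma>) * perm_mat d \<sigma> = 1\<^sub>m d"
  proof (rule eq_matI)
    fix k l assume "k < dim_row (1\<^sub>m d :: complex mat)" "l < dim_col (1\<^sub>m d :: complex mat)"
    then have kl: "k < d" "l < d" by simp_all
    then have "(adj (perm_mat d \<sigma>) * perm_mat d \<sigma>) $$ (k,l)
        = (\<Sum>i<d. (if k = \<sigma> i then 1 else 0) * (if l = \<sigma> i then 1 else 0))"
      by (simp add: perm_mat_def scalar_prod_def atLeast0LessThan if_distrib[where f = cnj] cong: if_cong)
    also have "\<dots> = (\<Sum>j<d. (if k = j then 1 else 0) * (if l = j then 1 else 0))"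
      using sum.reindex_bij_betw[OF permutes_imp_bij[OF \<sigma>]] by simp
    also have "\<dots> = (\<Sum>j<d. if j = k then (if l = k then 1 else 0) else 0)"
      by (intro sum.cong refl) auto
    also have "\<dots> = 1\<^sub>m d $$ (k,l)" using kl by simp
    finally show "(adj (perm_mat d \<sigma>) * perm_mat d \<sigma>) $$ (k,l) = 1\<^sub>m d $$ (k,l)" .
  qed (simp_all add: perm_mat_def)
qed (simp add: perm_mat_def)

lemma mtrace_real_diag_conj_perm_mat:
  assumes \<sigma>: "\<sigma> permutes {..<d}"
  shows "Re (mtrace (real_diag_mat d eps * (perm_mat d \<sigma> * real_diag_mat d p * adj (perm_mat d \<sigma>))))
    = (\<Sum>i<d. eps i * p (\<sigma> i))"
proof -
  have row: "(\<Sum>k<d. eps i * (cmod (perm_mat d \<sigma> $$ (i,k)))\<^sup>2 * p k) = eps i * p (\<sigma> i)"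
    if "i < d" for i
  proof -
    have "\<sigma> i < d" using permutes_in_image[OF \<sigma>] that by auto
    have "(\<Sum>k<d. eps i * (cmod (perm_mat d \<sigma> $$ (i,k)))\<^sup>2 * p k)
        = (\<Sum>k<d. if k = \<sigma> i then eps i * p k else 0)"
      using that by (intro sum.cong refl) (auto simp: perm_mat_def)
    then show ?thesis using \<open>\<sigma> i < d\<close> by simp
  qed
  have "perm_mat d \<sigma> \<in> carrier_mat d d" by (simp add: perm_mat_def)
  then show ?thesis by (simp add: mtrace_real_diag_conj_real_diag row)
qed

lemma mtrace_real_diag_conj_ge_rearrangement:
  assumes U: "unitary_mat d W"
    and eps_mono: "\<And>i j. i \<le> j \<Longrightarrow> j < d \<Longrightarrow> eps i \<le> eps j"
    and \<sigma>: "\<sigma> permutes {..<d}" and r_p: "\<And>i. i < d \<Longrightarrow> r i = p (\<sigma> i)"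
    and r_antimono: "\<And>i j. i \<le> j \<Longrightarrow> j < d \<Longrightarrow> r j \<le> r i"
  shows "(\<Sum>i<d. eps i * r i) \<le> Re (mtrace (real_diag_mat d eps * (W * real_diag_mat d p * adj W)))"
proof -
  have "W \<in> carrier_mat d d" using U by (simp add: unitary_mat_def)
  moreover have "(\<Sum>i<d. eps i * r i) \<le> (\<Sum>i<d. \<Sum>k<d. eps i * (cmod (W $$ (i,k)))\<^sup>2 * p k)"
    using unitary_mat_row_norm[OF U] unitary_mat_col_norm[OF U]
    by (intro rearrangement_le_doubly_stochastic[where B = "\<lambda>i k. (cmod (W $$ (i,k)))\<^sup>2"
          and d = d and eps = eps and r = r and p = p, OF _ _ _ eps_mono \<sigma> r_p r_antimono]) auto
  ultimately show ?thesis by (simp add: mtrace_real_diag_conj_real_diag)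
qed

lemma ergotropy_real_diag:
  assumes eps_mono: "\<And>i j. i \<le> j \<Longrightarrow> j < d \<Longrightarrow> eps i \<le> eps j"
  shows "ergotropy d (real_diag_mat d p) (real_diag_mat d eps)
    = (\<Sum>i<d. p i * eps i) - (\<Sum>i<d. decr_rearr d p ! i * eps i)"
proof -
  obtain \<sigma> where \<sigma>: "\<sigma> permutes {..<d}"
    and r_p: "\<And>i. i < d \<Longrightarrow> decr_rearr d p ! i = p (\<sigma> i)"
    using decr_rearr_permutes[of d p] by blast
  have initial: "Re (mtrace (real_diag_mat d p * real_diag_mat d eps)) = (\<Sum>i<d. p i * eps i)"
    unfolding mtrace_mult_mat_diag[OF mat_diag_dim] by (simp add: mat_diag_def)
  have "ergotropy d (real_diag_mat d p) (real_diag_mat d eps)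
      \<le> (\<Sum>i<d. p i * eps i) - (\<Sum>i<d. eps i * decr_rearr d p ! i)"
    unfolding initial[symmetric]
    by (intro ergotropy_le mtrace_real_diag_conj_ge_rearrangement[where eps = eps and p = p
          and r = "\<lambda>i. decr_rearr d p ! i", OF _ eps_mono \<sigma> r_p decr_rearr_antimono])
  moreover have "(\<Sum>i<d. p i * eps i) - (\<Sum>i<d. eps i * decr_rearr d p ! i)
      \<le> ergotropy d (real_diag_mat d p) (real_diag_mat d eps)"
    using ergotropy_real_diag_ge[OF perm_mat_unitary[OF \<sigma>] mat_diag_dim, of p eps]
    unfolding initial mtrace_real_diag_conj_perm_mat[OF \<sigma>] by (simp add: r_p)
  ultimately show ?thesis by (simp add: mult.commute)
qed

section \<open>Dephasing does not increase the ergotropy\<close>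

definition partial_dephase :: "nat \<Rightarrow> nat \<Rightarrow> complex mat \<Rightarrow> complex mat" where
  "partial_dephase d n A = mat d d (\<lambda>(a,b). if a = b \<or> n \<le> a \<and> n \<le> b then A $$ (a,b) else 0)"

definition sign_flip :: "nat \<Rightarrow> nat \<Rightarrow> complex mat" where
  "sign_flip d n = mat_diag d (\<lambda>a. if a = n then -1 else 1)"

lemma partial_dephase_carrier [simp]: "partial_dephase d n A \<in> carrier_mat d d"
  by (simp add: partial_dephase_def)

lemma sign_flip_unitary: "unitary_mat d (sign_flip d n)"
proof (rule unitary_matI)
  have "adj (sign_flip d n) = sign_flip d n"
    by (rule eq_matI) (auto simp: sign_flip_def mat_diag_def)
  moreover have "sign_flip d n * sign_flip d n = 1\<^sub>m d"
    unfolding sign_flip_def mat_diag_diag by (rule eq_matI) (auto simp: mat_diag_def)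
  ultimately show "adj (sign_flip d n) * sign_flip d n = 1\<^sub>m d" by simp
qed (simp add: sign_flip_def)

lemma mtrace_conj_partial_dephase_Suc:
  assumes "n < d" and W: "W \<in> carrier_mat d d"
  shows "2 * mtrace (mat_diag d f * (W * partial_dephase d (Suc n) A * adj W)) =
    mtrace (mat_diag d f * (W * partial_dephase d n A * adj W)) +
    mtrace (mat_diag d f * ((W * sign_flip d n) * partial_dephase d n A * adj (W * sign_flip d n)))"
proof -
  let ?M = "partial_dephase d n A" and ?M' = "partial_dephase d (Suc n) A"
  have WS: "W * sign_flip d n = mat d d (\<lambda>(i,j). W $$ (i,j) * (if j = n then -1 else 1))"
    unfolding sign_flip_def by (rule mat_diag_mult_right[OF W])
  have WS_carrier: "W * sign_flip d n \<in> carrier_mat d d" using W by (simp add: sign_flip_def)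
  \<comment> \<open>The entries (n,b) and (a,n) with a, b > n change sign under the flip, so they cancel
     in the sum.\<close>
  have entrywise: "2 * (f i * W $$ (i,a) * ?M' $$ (a,b) * cnj (W $$ (i,b))) =
      f i * W $$ (i,a) * ?M $$ (a,b) * cnj (W $$ (i,b)) +
      f i * (W * sign_flip d n) $$ (i,a) * ?M $$ (a,b) * cnj ((W * sign_flip d n) $$ (i,b))"
    if "i < d" "a < d" "b < d" for i a b
    using that \<open>n < d\<close> by (auto simp: WS partial_dephase_def algebra_simps)
  show ?thesis
    unfolding mtrace_mat_diag_conj[OF W partial_dephase_carrier]
      mtrace_mat_diag_conj[OF WS_carrier partial_dephase_carrier]
    by (simp add: sum_distrib_left sum.distrib[symmetric] entrywise)
qed

lemma exists_unitary_conj_le_partial_dephase: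
  assumes A: "A \<in> carrier_mat d d" and "n \<le> d" and "unitary_mat d W"
  shows "\<exists>V. unitary_mat d V \<and> Re (mtrace (mat_diag d f * (V * A * adj V)))
    \<le> Re (mtrace (mat_diag d f * (W * partial_dephase d n A * adj W)))"
  using assms(2,3)
proof (induction n arbitrary: W)
  case 0
  have "partial_dephase d 0 A = A" using A by (intro eq_matI) (auto simp: partial_dephase_def)
  then show ?case using "0.prems" by auto
next
  case (Suc n)
  define T where "T V M = Re (mtrace (mat_diag d f * (V * M * adj V)))" for V M
  have "n < d" "W \<in> carrier_mat d d" using Suc.prems by (simp_all add: unitary_mat_def)
  from arg_cong[where f = Re, OF mtrace_conj_partial_dephase_Suc[OF this, of f A]]
  have "2 * T W (partial_dephase d (Suc n) A)
      = T W (partial_dephase d n A) + T (W * sign_flip d n) (partial_dephase d n A)"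
    unfolding T_def by simp
  then obtain W' where W': "unitary_mat d W'"
    and W'_le: "T W' (partial_dephase d n A) \<le> T W (partial_dephase d (Suc n) A)"
  proof (cases "T W (partial_dephase d n A) \<le> T W (partial_dephase d (Suc n) A)")
    case False
    then have "T (W * sign_flip d n) (partial_dephase d n A) \<le> T W (partial_dephase d (Suc n) A)"
      using \<open>2 * _ = _\<close> by linarith
    then show thesis using that unitary_mat_mult[OF Suc.prems(2) sign_flip_unitary] by blast
  qed (use Suc.prems that in blast)
  obtain V where "unitary_mat d V" "T V A \<le> T W' (partial_dephase d n A)"
    using Suc.IH[OF _ W'] Suc.prems unfolding T_def by auto
  then show ?case using W'_le unfolding T_def by auto
qed

lemma ergotropy_real_diag_le:
  assumes A: "A \<in> carrier_mat d d" and A_diag: "\<And>k. k < d \<Longrightarrow> A $$ (k,k) = complex_of_real (p k)"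
    and eps_mono: "\<And>i j. i \<le> j \<Longrightarrow> j < d \<Longrightarrow> eps i \<le> eps j"
  shows "ergotropy d (real_diag_mat d p) (real_diag_mat d eps) \<le> ergotropy d A (real_diag_mat d eps)"
proof -
  obtain \<sigma> where \<sigma>: "\<sigma> permutes {..<d}"
    and r_p: "\<And>i. i < d \<Longrightarrow> decr_rearr d p ! i = p (\<sigma> i)"
    using decr_rearr_permutes[of d p] by blast
  have "partial_dephase d d A = real_diag_mat d p"
    using A_diag by (intro eq_matI) (auto simp: partial_dephase_def mat_diag_def)
  then obtain V where V: "unitary_mat d V"
    and "Re (mtrace (real_diag_mat d eps * (V * A * adj V)))
      \<le> Re (mtrace (real_diag_mat d eps * (perm_mat d \<sigma> * real_diag_mat d p * adj (perm_mat d \<sigma>))))"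
    using exists_unitary_conj_le_partial_dephase[OF A order.refl perm_mat_unitary[OF \<sigma>]] by metis
  then have "Re (mtrace (real_diag_mat d eps * (V * A * adj V))) \<le> (\<Sum>i<d. decr_rearr d p ! i * eps i)"
    by (simp add: mtrace_real_diag_conj_perm_mat[OF \<sigma>] r_p mult.commute)
  moreover have "Re (mtrace (A * real_diag_mat d eps)) = (\<Sum>i<d. p i * eps i)"
    using A_diag by (simp add: mtrace_mult_mat_diag[OF A])
  ultimately show ?thesis
    using ergotropy_real_diag_ge[OF V A, of eps]
      ergotropy_real_diag[where d = d and eps = eps and p = p, OF eps_mono]
    by linarith
qed

section \<open>The ergotropy minimiser\<close>

lemma ergotropy_spectral_sum_conj:
  assumes E: "unitary_mat d (basis_mat d e)" and \<omega>: "\<omega> \<in> carrier_mat d d"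
  shows "ergotropy d \<omega> (real_spectral_sum d e eps)
    = ergotropy d (adj (basis_mat d e) * \<omega> * basis_mat d e) (real_diag_mat d eps)"
  using ergotropy_unitary_conj[OF E \<omega> spectral_sum_carrier[of d e "\<lambda>k. complex_of_real (eps k)"]]
    basis_conj_spectral_sum[OF E] by simp

lemma density_populations:
  assumes e_dim: "\<And>i. i < d \<Longrightarrow> e i \<in> carrier_vec d" and E: "unitary_mat d (basis_mat d e)"
    and X: "density d X"
    and p_def: "\<And>i. i < d \<Longrightarrow> complex_of_real (p i) = mtrace (proj (e i) * X)"
  shows "\<And>k. k < d \<Longrightarrow> 0 \<le> p k" and "(\<Sum>k<d. p k) = 1"
proof -
  have Xc: "X \<in> carrier_mat d d" using X by (simp add: density_def psd_def)
  have X_diag: "(adj (basis_mat d e) * X * basis_mat d e) $$ (k,k) = complex_of_real (p k)" if "k < d" for k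
    using basis_conj_diag_entry(3)[where e = e, OF e_dim Xc that] p_def[OF that] by simp
  show "0 \<le> p k" if "k < d" for k
    using X e_dim[OF that] basis_conj_diag_entry(1)[where e = e, OF e_dim Xc that] X_diag[OF that]
    by (auto simp: density_def psd_def)
  have "complex_of_real (\<Sum>k<d. p k) = mtrace (adj (basis_mat d e) * X * basis_mat d e)"
    unfolding mtrace_def using X_diag by simp
  also have "\<dots> = 1" using mtrace_unitary_conj[OF E Xc] X by (simp add: density_def)
  finally show "(\<Sum>k<d. p k) = 1" by (metis of_real_eq_1_iff)
qed

lemma spectral_sum_state:
  assumes e_dim: "\<And>i. i < d \<Longrightarrow> e i \<in> carrier_vec d" and E: "unitary_mat d (basis_mat d e)"
    and p_nonneg: "\<And>k. k < d \<Longrightarrow> 0 \<le> p k" and p_sum: "(\<Sum>k<d. p k) = 1"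
  defines "\<rho> \<equiv> real_spectral_sum d e p"
  shows "psd d \<rho>" and "mtrace \<rho> = 1"
    and "\<And>i. i < d \<Longrightarrow> mtrace (\<rho> * proj (e i)) = complex_of_real (p i)"
proof -
  have \<rho>: "\<rho> \<in> carrier_mat d d" unfolding \<rho>_def by simp
  have \<rho>_diag: "adj (basis_mat d e) * \<rho> * basis_mat d e = real_diag_mat d p"
    unfolding \<rho>_def using E by (rule basis_conj_spectral_sum)
  show "psd d \<rho>" unfolding \<rho>_def using p_nonneg by (rule psd_spectral_sum)
  have "mtrace \<rho> = mtrace (real_diag_mat d p)" using mtrace_unitary_conj[OF E \<rho>] \<rho>_diag by simp
  then show "mtrace \<rho> = 1" using p_sum by (simp add: mtrace_def mat_diag_def flip: of_real_sum)
  show "mtrace (\<rho> * proj (e i)) = complex_of_real (p i)" if "i < d" for i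
    using basis_conj_diag_entry(2)[where e = e, OF e_dim \<rho> that] \<rho>_diag that by (simp add: mat_diag_def)
qed

lemma ergotropy_spectral_sum:
  assumes E: "unitary_mat d (basis_mat d e)"
    and eps_mono: "\<And>i j. i \<le> j \<Longrightarrow> j < d \<Longrightarrow> eps i \<le> eps j"
  shows "ergotropy d (real_spectral_sum d e p) (real_spectral_sum d e eps)
    = (\<Sum>i<d. p i * eps i) - (\<Sum>i<d. decr_rearr d p ! i * eps i)"
  using ergotropy_spectral_sum_conj[OF E spectral_sum_carrier] basis_conj_spectral_sum[OF E]
    ergotropy_real_diag[where d = d and eps = eps and p = p, OF eps_mono]
  by simp

lemma ergotropy_spectral_sum_le:
  assumes e_dim: "\<And>i. i < d \<Longrightarrow> e i \<in> carrier_vec d" and E: "unitary_mat d (basis_mat d e)"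
    and eps_mono: "\<And>i j. i \<le> j \<Longrightarrow> j < d \<Longrightarrow> eps i \<le> eps j"
    and \<omega>: "\<omega> \<in> carrier_mat d d"
    and \<omega>_diag: "\<And>i. i < d \<Longrightarrow> mtrace (\<omega> * proj (e i)) = complex_of_real (p i)"
  shows "ergotropy d (real_spectral_sum d e p) (real_spectral_sum d e eps)
    \<le> ergotropy d \<omega> (real_spectral_sum d e eps)"
proof -
  have "(adj (basis_mat d e) * \<omega> * basis_mat d e) $$ (k,k) = complex_of_real (p k)" if "k < d" for k
    using basis_conj_diag_entry(2)[where e = e, OF e_dim \<omega> that] \<omega>_diag[OF that] by simp
  from ergotropy_real_diag_le[OF _ this eps_mono] E \<omega>
  show ?thesis
    by (simp add: ergotropy_spectral_sum_conj basis_conj_spectral_sum unitary_mat_def)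
qed

lemma dephase_eq_spectral_sum:
  assumes e_dim: "\<And>i. i < d \<Longrightarrow> e i \<in> carrier_vec d" and X: "X \<in> carrier_mat d d"
    and p_def: "\<And>i. i < d \<Longrightarrow> complex_of_real (p i) = mtrace (proj (e i) * X)"
  shows "dephase d e X = real_spectral_sum d e p"
  unfolding dephase_def
  using basis_conj_diag_entry(1,3)[where e = e, OF e_dim X] p_def by (intro spectral_sum_cong) simp

theorem lemma1:
  fixes d :: nat and e :: "nat \<Rightarrow> complex vec" and eps :: "nat \<Rightarrow> real"
    and H X :: "complex mat" and p :: "nat \<Rightarrow> real"
  assumes e_dim: "\<And>i. i < d \<Longrightarrow> e i \<in> carrier_vec d"
    and e_orthonormal: "\<And>i j. i < d \<Longrightarrow> j < d \<Longrightarrow> cinner (e i) (e j) = (if i = j then 1 else 0)"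
    and H_def: "H = spectral_sum d e (\<lambda>k. complex_of_real (eps k))"
    and eps_sorted: "\<And>i j. i \<le> j \<Longrightarrow> j < d \<Longrightarrow> eps i \<le> eps j"
    and X_density: "density d X"
    and p_def: "\<And>i. i < d \<Longrightarrow> complex_of_real (p i) = mtrace (proj (e i) * X)"
  shows "let \<Omega> = {\<omega>. psd d \<omega> \<and> mtrace \<omega> = 1 \<and>
                   (\<forall>i<d. mtrace (\<omega> * proj (e i)) = complex_of_real (p i))};
             \<rho> = spectral_sum d e (\<lambda>k. complex_of_real (p k))
         in \<rho> \<in> \<Omega> \<and>
            (\<forall>\<omega>\<in>\<Omega>. ergotropy d \<rho> H \<le> ergotropy d \<omega> H) \<and>
            ergotropy d \<rho> H = (\<Sum>i<d. p i * eps i) - (\<Sum>i<d. decr_rearr d p ! i * eps i) \<and>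
            ergotropy d \<rho> H = incoherent_ergotropy d e H X"
proof -
  have E: "unitary_mat d (basis_mat d e)" using e_dim e_orthonormal by (rule basis_mat_unitary)
  have X: "X \<in> carrier_mat d d" using X_density by (simp add: density_def psd_def)
  note populations = density_populations[where p = p, OF e_dim E X_density p_def]
  note \<rho>_state = spectral_sum_state[where p = p, OF e_dim E populations]
  have "ergotropy d (real_spectral_sum d e p) H \<le> ergotropy d \<omega> H"
    if "psd d \<omega>" "\<forall>i<d. mtrace (\<omega> * proj (e i)) = complex_of_real (p i)" for \<omega>
    using that unfolding H_def psd_def by (intro ergotropy_spectral_sum_le[OF e_dim E eps_sorted]) auto
  then show ?thesis
    using \<rho>_state ergotropy_spectral_sum[OF E eps_sorted] dephase_eq_spectral_sum[OF e_dim X p_def]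
    unfolding Let_def H_def incoherent_ergotropy_def by auto
qed

end
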